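(* Assume (A) and (D). For every $t>0$ there exists a constant $\kappa(t)>0$ such that for every nonnegative $h\in L^1(\mu)$ with $\|h\|_{L^1(\mu)}=1$, $$Q_th(x)\le\frac{\kappa(t)}{f_1^2(|x|)},\qquad x\in\mathbb R^d.$$ In particular, with $\alpha_t(u)=(f^2)^{-1}(\kappa(t)/u)$, for every $u\ge\kappa(t)$, $$\{x\in\mathbb R^d:\ Q_th(x)\ge u\}\subset\{x\in\mathbb R^d:\ |x|\ge\alpha_t(u)\}.$$
   Context: Setting. Fix $d\ge1$. Let $A$ be a positive semidefinite $d\times d$ matrix and $\nu$ a symmetric Lévy measure on $\mathbb R^d\setminus\{0\}$ (positive Radon measure with $\int(1\wedge|z|^2)\,\nu(dz)<\infty$, $\nu(-B)=\nu(B)$) with $\nu(\mathbb R^d\setminus\{0\})=\infty$, absolutely continuous with density also denoted $\nu(x)$. The Lévy operator $L$ on $L^2(dx)$ is the Fourier multiplier $\widehat{Lh}(\xi)=-\Psi(\xi)\widehat h(\xi)$ with $\Psi(\xi)=\tfrac12A\xi\cdot\xi+\int(1-\cos(\xi\cdot z))\,\nu(dz)$; $\{P_t\}_{t\ge0}$ is the associated convolution semigroup, $P_th(x)=\int p_t(y-x)h(y)\,dy$ with densities $p_t$. Let $V$ be locally bounded on $\mathbb R^d$ with $V(x)\to\infty$ as $|x|\to\infty$, and let $H=-L+V$ (self-adjoint, bounded below, defined via quadratic forms on $L^2(dx)$). For $t>0$, $e^{-tH}$ has a continuous, positive, symmetric kernel $u_t(x,y)$. Let $\lambda_0=\inf\sigma(H)$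 (a simple eigenvalue) and $\varphi_0$ the corresponding strictly positive, continuous, bounded eigenfunction with $\|\varphi_0\|_{L^2(dx)}=1$. Set $\mu(dx)=\varphi_0^2(x)\,dx$ (a probability measure), $q_t(x,y)=\dfrac{e^{\lambda_0t}u_t(x,y)}{\varphi_0(x)\varphi_0(y)}$ and $Q_th(x)=\int q_t(x,y)h(y)\,\mu(dy)$; $\{Q_t\}$ is a semigroup of contractions on every $L^p(\mu)$, $1\le p\le\infty$, and $q_t$ is symmetric. Assumption (A): there exist a strictly decreasing continuous $f:(0,\infty)\to(0,\infty)$, a strictly increasing continuous $g:[0,\infty)\to(0,\infty)$, constants $C_1,C_2\ge1$ and $R_0>0$ such that $C_1^{-1}f(|x|)\le\nu(x)\le C_1f(|x|)$ for $x\ne0$ and $C_2^{-1}g(|x|)\le V(x)\le C_2g(|x|)$ for $|x|\ge R_0$, and moreover: (A1) there is $C_3>0$ with $\int_{\{|x-y|>1,\,|y|>1\}}f(|x-y|)f(|y|)\,dy\le C_3f(|x|)$ for $|x|\ge1$; (A2) $(t,x)\mapsto p_t(x)$ is continuous on $(0,\infty)\times\mathbb R^d$ and for every $t_b>0$ there are $C_4,C_5>0$ with $p_t(x)\le C_4\big([e^{C_5t}f(|x|)]\wedge1\big)$ for $x\neq0$, $t\ge t_b$, and $\sup_{t\in(0,t_b]}\sup_{r\le|x|\le2}p_t(x)<\infty$ for every $r\in(0,1]$; (A3) there is $C_6\ge1$ with $g(r+1)\le C_6g(r)$ for $r\ge R_0$. Under (A), $f$ is a bijection of $(0,\infty)$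 onto $(0,\infty)$ and $f^{-1}$, $(f^2)^{-1}$ denote the inverses. We write $f_1=f\wedge1$. Condition (D): the map $r\mapsto g(r)/|\log f(r)|$ is eventually decreasing and $\lim_{r\to\infty}g(r)/|\log f(r)|=0$. Heat kernel estimate (a known consequence of (A), used as standing input): for every $T>0$ there exist $\rho>1$, $C=C(T)>0$ and constants $K,\widetilde K>0$ independent of $T$ such that for all $x,y\in\mathbb R^d$ and $t\ge T$, $C^{-1}\max\{1,e^{\lambda_0t}\Gamma(\widetilde Kt,x,y)\}\le q_t(x,y)\le C\max\{1,e^{\lambda_0t}\Gamma(Kt,x,y)\}$, where $\Gamma(\tau,x,y)=\dfrac{\mathbf 1_{\{|x|,|y|>\rho\}}}{f_1(|x|)f_1(|y|)}\displaystyle\int_{\rho-1<|z|<|x|\vee|y|}f_1(|x-z|)f_1(|z-y|)e^{-\tau g(|z|)}\,dz$. Throughout, $K$ and $\widetilde K$ denote fixed constants for which this two-sided estimate holds. *)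

theory Defs
  imports "HOL-Analysis.Analysis"
begin

text \<open>Truncation f_1 = f \<and> 1 of the radial profile f (defined on (0,\<infinity>)).
  At r = 0 we use the convention f(0) = +\<infinity>, i.e. f_1(0) = 1.\<close>
definition f1 :: "(real \<Rightarrow> real) \<Rightarrow> real \<Rightarrow> real" where
  "f1 f r = (if r > 0 then min (f r) 1 else 1)"

definition levy_density :: "('a::euclidean_space \<Rightarrow> real) \<Rightarrow> bool" where
  "levy_density nu \<longleftrightarrow>
     nu \<in> borel_measurable borel \<and> (\<forall>x. nu x \<ge> 0) \<and> (\<forall>x. nu (- x) = nu x) \<and>
     (\<integral>\<^sup>+ z. ennreal (indicator (UNIV - {0}) z * min 1 ((norm z)\<^sup>2) * nu z) \<partial>lborel) < \<infinity> \<and>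
     (\<integral>\<^sup>+ z. ennreal (indicator (UNIV - {0}) z * nu z) \<partial>lborel) = \<infinity>"

definition confining_potential :: "('a::euclidean_space \<Rightarrow> real) \<Rightarrow> bool" where
  "confining_potential V \<longleftrightarrow>
     (\<forall>K. compact K \<longrightarrow> bounded (V ` K)) \<and> filterlim V at_top at_infinity"

definition assumption_A ::
  "(real \<Rightarrow> real) \<Rightarrow> (real \<Rightarrow> real) \<Rightarrow> ('a::euclidean_space \<Rightarrow> real) \<Rightarrow> ('a \<Rightarrow> real)
    \<Rightarrow> (real \<Rightarrow> 'a \<Rightarrow> real) \<Rightarrow> bool" where
  "assumption_A f g nu V p \<longleftrightarrow>
     (\<forall>r s. 0 < r \<longrightarrow> r < s \<longrightarrow> f s < f r) \<and> continuous_on {0<..} f \<and> (\<forall>r>0. f r > 0) \<and>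
     (\<forall>r s. 0 \<le> r \<longrightarrow> r < s \<longrightarrow> g r < g s) \<and> continuous_on {0..} g \<and> (\<forall>r\<ge>0. g r > 0) \<and>
     (\<exists>C1 C2 R0. C1 \<ge> 1 \<and> C2 \<ge> 1 \<and> R0 > 0 \<and>
        (\<forall>x. x \<noteq> 0 \<longrightarrow> f (norm x) / C1 \<le> nu x \<and> nu x \<le> C1 * f (norm x)) \<and>
        (\<forall>x. norm x \<ge> R0 \<longrightarrow> g (norm x) / C2 \<le> V x \<and> V x \<le> C2 * g (norm x)) \<and>
        \<comment> \<open>(A3)\<close>
        (\<exists>C6 \<ge> 1. \<forall>r \<ge> R0. g (r + 1) \<le> C6 * g r)) \<and>
     \<comment> \<open>(A1)\<close>
     (\<exists>C3 > 0. \<forall>x::'a. norm x \<ge> 1 \<longrightarrow>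
        (\<integral>\<^sup>+ y. ennreal (indicator {y. norm (x - y) > 1 \<and> norm y > 1} y
                         * f (norm (x - y)) * f (norm y)) \<partial>lborel) \<le> ennreal (C3 * f (norm x))) \<and>
     \<comment> \<open>(A2)\<close>
     continuous_on ({0<..} \<times> UNIV) (\<lambda>(t, x). p t x) \<and>
     (\<forall>tb > 0. \<exists>C4 > 0. \<exists>C5 > 0. \<forall>t x. x \<noteq> 0 \<and> t \<ge> tb \<longrightarrow>
        p t x \<le> C4 * min (exp (C5 * t) * f (norm x)) 1) \<and>
     (\<forall>tb > 0. \<forall>r. 0 < r \<and> r \<le> 1 \<longrightarrow>
        bdd_above {p t x | t x. 0 < t \<and> t \<le> tb \<and> r \<le> norm x \<and> norm x \<le> 2})"

definition condition_D :: "(real \<Rightarrow> real) \<Rightarrow> (real \<Rightarrow> real) \<Rightarrow> bool" where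
  "condition_D f g \<longleftrightarrow>
     (\<exists>R. \<forall>r s. R \<le> r \<longrightarrow> r \<le> s \<longrightarrow> g s / \<bar>ln (f s)\<bar> \<le> g r / \<bar>ln (f r)\<bar>) \<and>
     ((\<lambda>r. g r / \<bar>ln (f r)\<bar>) \<longlongrightarrow> 0) at_top"

definition ground_state :: "('a::euclidean_space \<Rightarrow> real) \<Rightarrow> bool" where
  "ground_state phi0 \<longleftrightarrow>
     continuous_on UNIV phi0 \<and> (\<forall>x. phi0 x > 0) \<and> bounded (range phi0) \<and>
     integrable lborel (\<lambda>x. (phi0 x)\<^sup>2) \<and> (\<integral>x. (phi0 x)\<^sup>2 \<partial>lborel) = 1"

definition schroedinger_kernel :: "(real \<Rightarrow> 'a::euclidean_space \<Rightarrow> 'a \<Rightarrow> real) \<Rightarrow> bool" where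
  "schroedinger_kernel u \<longleftrightarrow>
     (\<forall>t>0. continuous_on UNIV (\<lambda>(x, y). u t x y) \<and> (\<forall>x y. u t x y > 0 \<and> u t x y = u t y x))"

definition mu :: "('a::euclidean_space \<Rightarrow> real) \<Rightarrow> 'a measure" where
  "mu phi0 = density lborel (\<lambda>x. ennreal ((phi0 x)\<^sup>2))"

definition qk :: "real \<Rightarrow> ('a \<Rightarrow> real) \<Rightarrow> (real \<Rightarrow> 'a \<Rightarrow> 'a \<Rightarrow> real) \<Rightarrow> real \<Rightarrow> 'a \<Rightarrow> 'a \<Rightarrow> real" where
  "qk lambda0 phi0 u t x y = exp (lambda0 * t) * u t x y / (phi0 x * phi0 y)"

definition Qop :: "real \<Rightarrow> ('a::euclidean_space \<Rightarrow> real) \<Rightarrow> (real \<Rightarrow> 'a \<Rightarrow> 'a \<Rightarrow> real) \<Rightarrow> real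
    \<Rightarrow> ('a \<Rightarrow> real) \<Rightarrow> 'a \<Rightarrow> real" where
  "Qop lambda0 phi0 u t h x = (\<integral>y. qk lambda0 phi0 u t x y * h y \<partial>mu phi0)"

definition Gamma :: "(real \<Rightarrow> real) \<Rightarrow> (real \<Rightarrow> real) \<Rightarrow> real \<Rightarrow> real \<Rightarrow> 'a::euclidean_space \<Rightarrow> 'a \<Rightarrow> real" where
  "Gamma f g rho tau x y =
     (if norm x > rho \<and> norm y > rho then
        (\<integral>z. indicator {z. rho - 1 < norm z \<and> norm z < max (norm x) (norm y)} z
              * (f1 f (norm (x - z)) * f1 f (norm (z - y)) * exp (- tau * g (norm z))) \<partial>lborel)
        / (f1 f (norm x) * f1 f (norm y))
      else 0)"

definition heat_kernel_estimate ::
  "(real \<Rightarrow> real) \<Rightarrow> (real \<Rightarrow> real) \<Rightarrow> real \<Rightarrow> ('a::euclidean_space \<Rightarrow> real)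
     \<Rightarrow> (real \<Rightarrow> 'a \<Rightarrow> 'a \<Rightarrow> real) \<Rightarrow> bool" where
  "heat_kernel_estimate f g lambda0 phi0 u \<longleftrightarrow>
     (\<exists>K Kt. K > 0 \<and> Kt > 0 \<and>
       (\<forall>T > 0. \<exists>rho > 1. \<exists>C > 0. \<forall>x y t. t \<ge> T \<longrightarrow>
          max 1 (exp (lambda0 * t) * Gamma f g rho (Kt * t) x y) / C \<le> qk lambda0 phi0 u t x y \<and>
          qk lambda0 phi0 u t x y \<le> C * max 1 (exp (lambda0 * t) * Gamma f g rho (K * t) x y)))"

end

theory Submission
  imports Defs
begin

text \<open>By the upper heat kernel estimate, \<open>q\<^sub>t(x,y) \<le> C max {1, e\<^bsup>\<lambda>\<^sub>0 t\<^esup> \<Gamma>(Kt,x,y)}\<close>.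
  Dropping the factor \<open>e\<^bsup>-\<tau> g\<^esup> \<le> 1\<close>, the integral in \<open>\<Gamma>\<close> is at most the convolution
  \<open>\<integral> f\<^sub>1(|x-z|) f\<^sub>1(|z-y|) dz\<close>, which is \<open>\<le> M f\<^sub>1(|x-y|)\<close>: near \<open>x\<close> and \<open>y\<close> because
  \<open>f\<^sub>1(r) \<le> c f\<^sub>1(r+1)\<close>, far from both by (A1) (if \<open>|x-y| \<ge> 1\<close>) or by integrability of
  \<open>\<nu>\<close> at infinity (if \<open>|x-y| < 1\<close>). The quasi-multiplicativity
  \<open>f\<^sub>1(a) f\<^sub>1(b) \<le> c f\<^sub>1(a+b)\<close>, again a consequence of (A1), bounds
  \<open>f\<^sub>1(|x-y|) / (f\<^sub>1(|x|) f\<^sub>1(|y|))\<close> by \<open>(1+c) / f\<^sub>1(|x|)\<^sup>2\<close>. Hence \<open>q\<^sub>t(x,\<cdot>) \<le> k / f\<^sub>1(|x|)\<^sup>2\<close>,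
  and integrating against a probability density gives the bound on \<open>Q\<^sub>t h\<close>. The level sets
  are located by inverting the continuous decreasing function \<open>f\<^sup>2\<close>, which exceeds 1 near the
  origin because \<open>\<nu>\<close> has infinite mass.\<close>

lemma f1_eq: "0 < r \<Longrightarrow> f r \<le> 1 \<Longrightarrow> f1 f r = f r"
  by (simp add: f1_def)

lemma f1_le: "0 < r \<Longrightarrow> f1 f r \<le> f r"
  by (simp add: f1_def)

lemma norm_bounds_near_ray:
  fixes e y :: "'a::real_normed_vector"
  assumes e: "norm e = 1" and a: "1/2 \<le> a" and b: "1/2 \<le> b"
    and y: "y \<in> ball ((a - 1/2) *\<^sub>R e) (1/2)"
  shows "a - 1 < norm y" "norm y < a"
    and "b - 1 < norm ((a + b - 1) *\<^sub>R e - y)" "norm ((a + b - 1) *\<^sub>R e - y) < b"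
proof -
  define p where "p = (a - 1/2) *\<^sub>R e"
  define x where "x = (a + b - 1) *\<^sub>R e"
  have np: "norm p = a - 1/2" and nxp: "norm (x - p) = b - 1/2"
    using e a b by (simp_all add: x_def p_def algebra_simps flip: scaleR_diff_left)
  have d: "norm (p - y) < 1/2"
    using y by (simp add: p_def dist_norm)
  show "a - 1 < norm y" "norm y < a"
    using norm_triangle_ineq[of p "y - p"] norm_triangle_ineq[of y "p - y"] d np
    by (auto simp: norm_minus_commute)
  show "b - 1 < norm ((a + b - 1) *\<^sub>R e - y)" "norm ((a + b - 1) *\<^sub>R e - y) < b"
    using norm_triangle_ineq[of "x - p" "p - y"] norm_triangle_ineq[of "x - y" "y - p"] d nxp
    by (auto simp: x_def norm_minus_commute)
qed

lemma max_one_le_divide: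
  fixes E G B s :: real
  assumes E: "0 \<le> E" and B: "0 \<le> B" and s: "0 < s" "s \<le> 1" and G: "G \<le> B / s"
  shows "max 1 (E * G) \<le> (1 + E * B) / s"
proof (rule max.boundedI)
  have "0 \<le> E * B"
    using E B by simp
  then show "1 \<le> (1 + E * B) / s"
    using s by simp
  have "E * G \<le> E * (B / s)"
    using G E by (rule mult_left_mono)
  also have "\<dots> \<le> (1 + E * B) / s"
    using s by (simp add: divide_right_mono)
  finally show "E * G \<le> (1 + E * B) / s" .
qed

locale radial_profile =
  fixes f :: "real \<Rightarrow> real"
  assumes strict_decreasing: "\<And>r s. 0 < r \<Longrightarrow> r < s \<Longrightarrow> f s < f r"
    and positive: "\<And>r. 0 < r \<Longrightarrow> 0 < f r"
begin

lemma f1_pos: "0 < f1 f r"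
  using positive by (simp add: f1_def)

lemma f1_le_one: "f1 f r \<le> 1"
  by (simp add: f1_def)

lemma f1_antimono:
  assumes "0 \<le> a" "a \<le> b"
  shows "f1 f b \<le> f1 f a"
proof (cases "0 < a \<and> a < b")
  case True
  then show ?thesis
    using strict_decreasing[of a b] by (auto simp: f1_def)
next
  case False
  with assms show ?thesis
    by (auto simp: f1_def)
qed

text \<open>Testing (A1) on a ball of radius 1/2 around the point at distance \<open>a - 1/2\<close> on the
  segment from 0 to a point of norm \<open>a + b - 1\<close>.\<close>
lemma product_le_shifted_sum:
  fixes C3 :: real
  assumes C3: "C3 > 0" and A1: "\<forall>x::'a::euclidean_space. norm x \<ge> 1 \<longrightarrow>
        (\<integral>\<^sup>+ y. ennreal (indicator {y. norm (x - y) > 1 \<and> norm y > 1} y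
                         * f (norm (x - y)) * f (norm y)) \<partial>lborel) \<le> ennreal (C3 * f (norm x))"
  shows "\<exists>c>0. \<forall>a b. 2 < a \<longrightarrow> 2 < b \<longrightarrow> f a * f b \<le> c * f (a + b - 1)"
proof -
  obtain e :: 'a where "e \<in> Basis"
    using nonempty_Basis by blast
  then have e: "norm e = 1"
    by simp
  define m where "m = measure lborel (ball (0::'a) (1/2))"
  have m: "m > 0"
    unfolding m_def by simp
  have emeasure_ball: "emeasure lborel (ball p (1/2)) = ennreal m" for p :: 'a
    using emeasure_lborel_ball_finite[of p "1/2"]
    by (simp add: emeasure_eq_ennreal_measure m_def Ball_Volume.content_ball)
  show ?thesis
  proof (intro exI[of _ "C3 / m"] conjI allI impI)
    fix a b :: real
    assume a: "2 < a" and b: "2 < b"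
    define x where "x = (a + b - 1) *\<^sub>R e"
    have fab: "0 < f a" "0 < f b"
      using positive a b by auto
    have on_ball: "ennreal (f a * f b) * indicator (ball ((a - 1/2) *\<^sub>R e) (1/2)) y
        \<le> ennreal (indicator {y. norm (x - y) > 1 \<and> norm y > 1} y * f (norm (x - y)) * f (norm y))"
      for y
    proof (cases "y \<in> ball ((a - 1/2) *\<^sub>R e) (1/2)")
      case True
      note near = norm_bounds_near_ray[OF e _ _ True, of b]
      have "f a \<le> f (norm y)" "f b \<le> f (norm (x - y))"
        using strict_decreasing[of "norm y" a] strict_decreasing[of "norm (x - y)" b] near a b
        by (force simp: x_def)+
      then have "f a * f b \<le> f (norm (x - y)) * f (norm y)"
        using fab by (simp add: mult_mono' mult.commute)
      then show ?thesis
        using True near a b by (simp add: x_def indicator_def ennreal_leI)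
    qed simp
    have "ennreal (f a * f b) * ennreal m
        = (\<integral>\<^sup>+ y. ennreal (f a * f b) * indicator (ball ((a - 1/2) *\<^sub>R e) (1/2)) y \<partial>lborel)"
      by (simp add: nn_integral_cmult_indicator emeasure_ball)
    also have "\<dots> \<le> (\<integral>\<^sup>+ y. ennreal (indicator {y. norm (x - y) > 1 \<and> norm y > 1} y
                         * f (norm (x - y)) * f (norm y)) \<partial>lborel)"
      by (rule nn_integral_mono) (rule on_ball)
    also have "\<dots> \<le> ennreal (C3 * f (a + b - 1))"
      using A1[rule_format, of x] e a b by (simp add: x_def)
    finally have "f a * f b * m \<le> C3 * f (a + b - 1)"
      using fab m C3 positive[of "a + b - 1"] a b by (simp add: ennreal_mult'[symmetric])
    then show "f a * f b \<le> C3 / m * f (a + b - 1)"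
      using m by (simp add: field_simps)
  qed (use C3 m in simp)
qed

lemma f1_le_shift_two:
  assumes c0: "c0 > 0" and product: "\<forall>a b. 2 < a \<longrightarrow> 2 < b \<longrightarrow> f a * f b \<le> c0 * f (a + b - 1)"
    and t: "0 \<le> t"
  shows "f1 f t \<le> (1 + c0 / f 3 + 1 / f1 f 4) * f1 f (t + 2)"
proof -
  define c where "c = 1 + c0 / f 3 + 1 / f1 f 4"
  have f3: "f 3 > 0"
    using positive by simp
  have c: "1 \<le> c" "c0 / f 3 \<le> c" "1 / f1 f 4 \<le> c"
    using f3 c0 f1_pos[of 4] by (auto simp: c_def)
  have "f1 f t \<le> c * f1 f (t + 2)"
  proof (cases "t \<le> 2")
    case True
    have "f1 f 4 \<le> f1 f (t + 2)"
      using f1_antimono[of "t + 2" 4] t True by simp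
    then have "1 \<le> (1 / f1 f 4) * f1 f (t + 2)"
      using f1_pos[of 4] by (simp add: field_simps)
    also have "\<dots> \<le> c * f1 f (t + 2)"
      using c f1_pos[of "t + 2"] by (intro mult_right_mono) auto
    finally show ?thesis
      using f1_le_one[of t] by linarith
  next
    case False
    show ?thesis
    proof (cases "f (t + 2) \<le> 1")
      case True
      have "f1 f t \<le> f t"
        using False by (simp add: f1_le)
      also have "\<dots> \<le> (c0 / f 3) * f (t + 2)"
        using product[rule_format, of t 3] False f3 by (simp add: field_simps add.commute)
      also have "\<dots> \<le> c * f (t + 2)"
        using c positive[of "t + 2"] False by (intro mult_right_mono) auto
      finally show ?thesis
        using True False by (simp add: f1_eq)
    next
      case False
      then have "f1 f (t + 2) = 1"
        using \<open>\<not> t \<le> 2\<close> by (simp add: f1_def)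
      then show ?thesis
        using c f1_le_one[of t] by simp
    qed
  qed
  then show ?thesis
    by (simp add: c_def)
qed

lemma f1_le_shift:
  assumes c0: "c0 > 0" and product: "\<forall>a b. 2 < a \<longrightarrow> 2 < b \<longrightarrow> f a * f b \<le> c0 * f (a + b - 1)"
  shows "\<exists>c\<ge>1. \<forall>t\<ge>0. f1 f t \<le> c * f1 f (t + 1)"
proof (intro exI[of _ "1 + c0 / f 3 + 1 / f1 f 4"] conjI allI impI)
  show c: "1 \<le> 1 + c0 / f 3 + 1 / f1 f 4"
    using c0 positive[of 3] f1_pos[of 4] by simp
  fix t :: real
  assume t: "0 \<le> t"
  have "f1 f (t + 2) \<le> f1 f (t + 1)"
    using f1_antimono[of "t + 1" "t + 2"] t by simp
  then show "f1 f t \<le> (1 + c0 / f 3 + 1 / f1 f 4) * f1 f (t + 1)"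
    using f1_le_shift_two[OF c0 product t] c by (meson mult_left_mono order.trans zero_le_one)
qed

lemma f1_le_shift_power:
  assumes c: "1 \<le> c" and shift: "\<forall>t\<ge>0. f1 f t \<le> c * f1 f (t + 1)" and t: "0 \<le> t"
  shows "f1 f t \<le> c ^ n * f1 f (t + n)"
proof (induction n)
  case (Suc n)
  have "f1 f (t + n) \<le> c * f1 f (t + n + 1)"
    using shift t by simp
  then have step: "f1 f (t + n) \<le> c * f1 f (t + Suc n)"
    by (metis add.assoc add.commute of_nat_Suc)
  have "f1 f t \<le> c ^ n * f1 f (t + n)"
    by (rule Suc.IH)
  also have "\<dots> \<le> c ^ n * (c * f1 f (t + Suc n))"
    using step c by (intro mult_left_mono) auto
  finally show ?case
    by (simp add: ac_simps)
qed simp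

lemma f1_mult_le_add_near:
  assumes c1: "1 \<le> c1" and shift: "\<forall>t\<ge>0. f1 f t \<le> c1 * f1 f (t + 1)"
    and ab: "0 \<le> a" "a \<le> 3" "0 \<le> b"
  shows "f1 f a * f1 f b \<le> c1 ^ 4 * f1 f (a + b)"
proof -
  have "f1 f a * f1 f b \<le> f1 f b"
    using f1_pos[of a] f1_pos[of b] f1_le_one[of a] by (simp add: mult_left_le_one_le)
  also have "\<dots> \<le> c1 ^ 4 * f1 f (b + 4)"
    using f1_le_shift_power[OF c1 shift, of b 4] ab by simp
  also have "\<dots> \<le> c1 ^ 4 * f1 f (a + b)"
    using f1_antimono[of "a + b" "b + 4"] ab c1 by (intro mult_left_mono) auto
  finally show ?thesis .
qed

lemma f1_mult_le_add_far:
  assumes c0: "c0 > 0" and product: "\<forall>a b. 2 < a \<longrightarrow> 2 < b \<longrightarrow> f a * f b \<le> c0 * f (a + b - 1)"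
    and c1: "1 \<le> c1" and shift: "\<forall>t\<ge>0. f1 f t \<le> c1 * f1 f (t + 1)"
    and ab: "3 < a" "3 < b"
  shows "f1 f a * f1 f b \<le> (c0 + 1) * c1 * f1 f (a + b)"
proof -
  have shifted: "f1 f (a + b - 1) \<le> c1 * f1 f (a + b)"
    using shift[rule_format, of "a + b - 1"] ab by simp
  have "f1 f a * f1 f b \<le> (c0 + 1) * f1 f (a + b - 1)"
  proof (cases "f (a + b - 1) \<le> 1")
    case True
    have "f1 f a * f1 f b \<le> f a * f b"
      using ab f1_le[of a f] f1_le[of b f] f1_pos[of a] f1_pos[of b] by (intro mult_mono) auto
    also have "\<dots> \<le> c0 * f1 f (a + b - 1)"
      using product True ab by (simp add: f1_eq)
    finally show ?thesis
      using f1_pos[of "a + b - 1"] by (simp add: distrib_right)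
  next
    case False
    then have "f1 f (a + b - 1) = 1"
      using ab by (simp add: f1_def)
    moreover have "f1 f a * f1 f b \<le> 1"
      using f1_pos[of a] f1_pos[of b] f1_le_one[of a] f1_le_one[of b] by (simp add: mult_le_one)
    ultimately show ?thesis
      using c0 by simp
  qed
  also have "\<dots> \<le> (c0 + 1) * (c1 * f1 f (a + b))"
    using shifted c0 by (intro mult_left_mono) auto
  finally show ?thesis
    by (simp add: mult.assoc)
qed

lemma f1_mult_le_add:
  assumes c0: "c0 > 0" and product: "\<forall>a b. 2 < a \<longrightarrow> 2 < b \<longrightarrow> f a * f b \<le> c0 * f (a + b - 1)"
  shows "\<exists>c>0. \<forall>a b. 0 \<le> a \<longrightarrow> 0 \<le> b \<longrightarrow> f1 f a * f1 f b \<le> c * f1 f (a + b)"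
proof -
  obtain c1 where c1: "1 \<le> c1" and shift: "\<forall>t\<ge>0. f1 f t \<le> c1 * f1 f (t + 1)"
    using f1_le_shift[OF c0 product] by blast
  define c where "c = c1 ^ 4 + (c0 + 1) * c1"
  have c: "c1 ^ 4 \<le> c" "(c0 + 1) * c1 \<le> c"
    using c0 c1 by (simp_all add: c_def)
  show ?thesis
  proof (intro exI[of _ c] conjI allI impI)
    show "0 < c"
      using c c1 by (smt (verit) one_le_power)
    fix a b :: real
    assume a: "0 \<le> a" and b: "0 \<le> b"
    consider "a \<le> 3" | "b \<le> 3" | "3 < a" "3 < b"
      by linarith
    then have "f1 f a * f1 f b \<le> c1 ^ 4 * f1 f (a + b) \<or>
               f1 f a * f1 f b \<le> (c0 + 1) * c1 * f1 f (a + b)"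
    proof cases
      case 1
      then show ?thesis
        using f1_mult_le_add_near[OF c1 shift a 1 b] by blast
    next
      case 2
      then show ?thesis
        using f1_mult_le_add_near[OF c1 shift b 2 a] by (simp add: mult.commute add.commute)
    next
      case 3
      then show ?thesis
        using f1_mult_le_add_far[OF c0 product c1 shift] by blast
    qed
    then show "f1 f a * f1 f b \<le> c * f1 f (a + b)"
      using c f1_pos[of "a + b"] by (smt (verit) mult_right_mono)
  qed
qed

lemma f1_product_le_near:
  fixes x y z :: "'a::real_normed_vector"
  assumes c1: "1 \<le> c1" and shift: "\<forall>t\<ge>0. f1 f t \<le> c1 * f1 f (t + 1)"
    and near: "norm (x - z) \<le> 1 \<or> norm (z - y) \<le> 1"
  shows "f1 f (norm (x - z)) * f1 f (norm (z - y)) \<le> c1 * f1 f (norm (x - y))"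
proof -
  have shifted: "f1 f w \<le> c1 * f1 f (norm (x - y))" if "0 \<le> w" "norm (x - y) \<le> w + 1" for w
  proof -
    have "f1 f (w + 1) \<le> f1 f (norm (x - y))"
      using f1_antimono[of "norm (x - y)" "w + 1"] that by simp
    then show ?thesis
      using shift[rule_format, of w] that c1 by (smt (verit) mult_left_mono)
  qed
  have triangle: "norm (x - y) \<le> norm (x - z) + norm (z - y)"
    using norm_triangle_ineq[of "x - z" "z - y"] by simp
  have "f1 f (norm (x - z)) * f1 f (norm (z - y)) \<le> f1 f (norm (x - z))"
    and "f1 f (norm (x - z)) * f1 f (norm (z - y)) \<le> f1 f (norm (z - y))"
    using f1_pos f1_le_one by (simp_all add: mult_left_le_one_le mult_right_le_one_le less_imp_le)
  from near show ?thesis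
  proof
    assume "norm (x - z) \<le> 1"
    then have "f1 f (norm (z - y)) \<le> c1 * f1 f (norm (x - y))"
      using triangle by (intro shifted) auto
    with \<open>f1 f (norm (x - z)) * f1 f (norm (z - y)) \<le> f1 f (norm (z - y))\<close> show ?thesis
      by linarith
  next
    assume "norm (z - y) \<le> 1"
    then have "f1 f (norm (x - z)) \<le> c1 * f1 f (norm (x - y))"
      using triangle by (intro shifted) auto
    with \<open>f1 f (norm (x - z)) * f1 f (norm (z - y)) \<le> f1 f (norm (x - z))\<close> show ?thesis
      by linarith
  qed
qed

lemma f_le_f1:
  assumes "1 \<le> r"
  shows "f r \<le> (1 + f 1) * f1 f r"
proof (cases "f r \<le> 1")
  case True
  then show ?thesis
    using assms positive[of 1] positive[of r] by (simp add: f1_eq algebra_simps)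
next
  case False
  have "f r \<le> f 1"
    using assms strict_decreasing[of 1 r] by (cases "r = 1") auto
  with False assms show ?thesis
    by (simp add: f1_def)
qed

lemma f1_ratio_le:
  fixes x y :: "'a::real_normed_vector"
  assumes c: "0 \<le> c" and P: "\<forall>a b. 0 \<le> a \<longrightarrow> 0 \<le> b \<longrightarrow> f1 f a * f1 f b \<le> c * f1 f (a + b)"
  shows "f1 f (norm (x - y)) / (f1 f (norm x) * f1 f (norm y)) \<le> (1 + c) / (f1 f (norm x))\<^sup>2"
proof -
  define D where "D = norm (x - y)"
  have Fx: "0 < f1 f (norm x)" and Fy: "0 < f1 f (norm y)" and FD: "0 < f1 f D"
    by (rule f1_pos)+
  show ?thesis
  proof (cases "norm y \<le> norm x")
    case True
    then have "f1 f (norm x) \<le> f1 f (norm y)"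
      by (simp add: f1_antimono)
    then have "f1 f D / (f1 f (norm x) * f1 f (norm y)) \<le> 1 / (f1 f (norm x) * f1 f (norm x))"
      using Fx Fy f1_le_one[of D]
      by (intro frac_le mult_left_mono) auto
    also have "\<dots> \<le> (1 + c) / (f1 f (norm x))\<^sup>2"
      using c Fx by (simp add: power2_eq_square divide_right_mono)
    finally show ?thesis
      by (simp add: D_def)
  next
    case False
    have "norm y \<le> norm x + D"
      using norm_triangle_ineq[of "x - y" "- x"] by (simp add: D_def norm_minus_commute)
    then have "f1 f (norm x) * f1 f D \<le> c * f1 f (norm y)"
      using P[rule_format, of "norm x" D] f1_antimono[of "norm y" "norm x + D"] c
      by (smt (verit, best) D_def mult_left_mono norm_ge_zero)
    then have "f1 f D / (f1 f (norm x) * f1 f (norm y)) \<le> c / (f1 f (norm x))\<^sup>2"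
      using Fx Fy by (simp add: field_simps power2_eq_square)
    also have "\<dots> \<le> (1 + c) / (f1 f (norm x))\<^sup>2"
      using Fx by (simp add: divide_right_mono)
    finally show ?thesis
      by (simp add: D_def)
  qed
qed

lemma Gamma_le:
  fixes x y :: "'a::euclidean_space"
  assumes g: "\<And>r. 0 \<le> r \<Longrightarrow> 0 < g r" and tau: "0 \<le> tau"
    and M: "0 \<le> M" and conv: "\<forall>x y::'a. (\<integral>\<^sup>+ z. ennreal (f1 f (norm (x - z)) * f1 f (norm (z - y))) \<partial>lborel)
            \<le> ennreal (M * f1 f (norm (x - y)))"
    and c: "0 \<le> c" and P: "\<forall>a b. 0 \<le> a \<longrightarrow> 0 \<le> b \<longrightarrow> f1 f a * f1 f b \<le> c * f1 f (a + b)"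
  shows "Gamma f g rho tau x y \<le> M * (1 + c) / (f1 f (norm x))\<^sup>2"
proof (cases "rho < norm x \<and> rho < norm y")
  case False
  then show ?thesis
    using M c by (auto simp: Gamma_def)
next
  case True
  define \<phi> where "\<phi> z = indicator {z. rho - 1 < norm z \<and> norm z < max (norm x) (norm y)} z
      * (f1 f (norm (x - z)) * f1 f (norm (z - y)) * exp (- tau * g (norm z)))" for z
  have \<phi>_le: "\<phi> z \<le> f1 f (norm (x - z)) * f1 f (norm (z - y))" for z
  proof -
    have "exp (- tau * g (norm z)) \<le> 1"
      using g[of "norm z"] tau by simp
    then show ?thesis
      using f1_pos[of "norm (x - z)"] f1_pos[of "norm (z - y)"]
      by (simp add: \<phi>_def indicator_def mult_left_le less_imp_le)
  qed
  have integral_le: "(\<integral>z. \<phi> z \<partial>lborel) \<le> M * f1 f (norm (x - y))"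
  proof (rule integral_real_bounded)
    show "0 \<le> M * f1 f (norm (x - y))"
      using M f1_pos[of "norm (x - y)"] by simp
    have "(\<integral>\<^sup>+ z. ennreal (\<phi> z) \<partial>lborel)
        \<le> (\<integral>\<^sup>+ z. ennreal (f1 f (norm (x - z)) * f1 f (norm (z - y))) \<partial>lborel)"
      using \<phi>_le by (intro nn_integral_mono ennreal_leI)
    then show "(\<integral>\<^sup>+ z. ennreal (\<phi> z) \<partial>lborel) \<le> ennreal (M * f1 f (norm (x - y)))"
      using conv by (meson order.trans)
  qed
  have "Gamma f g rho tau x y = (\<integral>z. \<phi> z \<partial>lborel) / (f1 f (norm x) * f1 f (norm y))"
    using True by (simp add: Gamma_def \<phi>_def)
  also have "\<dots> \<le> M * (f1 f (norm (x - y)) / (f1 f (norm x) * f1 f (norm y)))"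
    using integral_le f1_pos[of "norm x"] f1_pos[of "norm y"] by (simp add: divide_right_mono)
  also have "\<dots> \<le> M * ((1 + c) / (f1 f (norm x))\<^sup>2)"
    using f1_ratio_le[OF c P] M by (intro mult_left_mono)
  finally show ?thesis
    by simp
qed

lemma qk_le_f1:
  fixes phi0 :: "'a::euclidean_space \<Rightarrow> real"
  assumes g: "\<And>r. 0 \<le> r \<Longrightarrow> 0 < g r" and hk: "heat_kernel_estimate f g lambda0 phi0 u"
    and t: "0 < t"
    and M: "0 \<le> M" and conv: "\<forall>x y::'a. (\<integral>\<^sup>+ z. ennreal (f1 f (norm (x - z)) * f1 f (norm (z - y))) \<partial>lborel)
            \<le> ennreal (M * f1 f (norm (x - y)))"
    and c: "0 \<le> c" and P: "\<forall>a b. 0 \<le> a \<longrightarrow> 0 \<le> b \<longrightarrow> f1 f a * f1 f b \<le> c * f1 f (a + b)"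
  shows "\<exists>k>0. \<forall>x y. qk lambda0 phi0 u t x y \<le> k / (f1 f (norm x))\<^sup>2"
proof -
  obtain K Kt where K: "0 < K" and estimate: "\<forall>T > 0. \<exists>rho > 1. \<exists>C > 0. \<forall>x y t. t \<ge> T \<longrightarrow>
      max 1 (exp (lambda0 * t) * Gamma f g rho (Kt * t) x y) / C \<le> qk lambda0 phi0 u t x y \<and>
      qk lambda0 phi0 u t x y \<le> C * max 1 (exp (lambda0 * t) * Gamma f g rho (K * t) x y)"
    using hk unfolding heat_kernel_estimate_def by blast
  obtain rho C where C: "0 < C" and estimate_t: "\<forall>x y s. t \<le> s \<longrightarrow>
      max 1 (exp (lambda0 * s) * Gamma f g rho (Kt * s) x y) / C \<le> qk lambda0 phi0 u s x y \<and>
      qk lambda0 phi0 u s x y \<le> C * max 1 (exp (lambda0 * s) * Gamma f g rho (K * s) x y)"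
    using estimate t by blast
  have upper: "qk lambda0 phi0 u t x y \<le> C * max 1 (exp (lambda0 * t) * Gamma f g rho (K * t) x y)"
    for x y
    using estimate_t by blast
  define E where "E = exp (lambda0 * t)"
  define B where "B = M * (1 + c)"
  have E: "0 \<le> E" and B: "0 \<le> B"
    using M c by (simp_all add: E_def B_def)
  show ?thesis
  proof (intro exI[of _ "C * (1 + E * B)"] conjI allI)
    show "0 < C * (1 + E * B)"
      using C E B by (simp add: add_pos_nonneg)
    fix x y :: 'a
    have s: "0 < (f1 f (norm x))\<^sup>2" "(f1 f (norm x))\<^sup>2 \<le> 1"
      using f1_pos[of "norm x"] f1_le_one[of "norm x"] by (simp_all add: power_le_one)
    have "Gamma f g rho (K * t) x y \<le> B / (f1 f (norm x))\<^sup>2"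
      using Gamma_le[OF g _ M conv c P] K t by (simp add: B_def)
    then have "max 1 (E * Gamma f g rho (K * t) x y) \<le> (1 + E * B) / (f1 f (norm x))\<^sup>2"
      by (rule max_one_le_divide[OF E B s])
    then have "C * max 1 (E * Gamma f g rho (K * t) x y) \<le> C * ((1 + E * B) / (f1 f (norm x))\<^sup>2)"
      by (rule mult_left_mono) (use C in simp)
    then show "qk lambda0 phi0 u t x y \<le> C * (1 + E * B) / (f1 f (norm x))\<^sup>2"
      using upper[of x y] by (simp add: E_def)
  qed
qed

end

lemma nn_integral_lborel_translate:
  fixes g :: "'a::euclidean_space \<Rightarrow> ennreal"
  assumes g: "g \<in> borel_measurable borel"
  shows "(\<integral>\<^sup>+ z. g (z - y) \<partial>lborel) = (\<integral>\<^sup>+ w. g w \<partial>lborel)"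
proof -
  have "(\<integral>\<^sup>+ w. g w \<partial>lborel) = (\<integral>\<^sup>+ w. g w \<partial>distr lborel borel ((+) (- y)))"
    by (simp add: lborel_distr_plus)
  also have "\<dots> = (\<integral>\<^sup>+ z. g (- y + z) \<partial>lborel)"
    using g by (simp add: nn_integral_distr)
  finally show ?thesis
    by simp
qed

lemma levy_tail_integral_finite:
  fixes nu :: "'a::euclidean_space \<Rightarrow> real"
  assumes levy: "levy_density nu" and C: "0 \<le> C"
    and lower: "\<And>x. x \<noteq> 0 \<Longrightarrow> f (norm x) \<le> C * nu x"
  shows "(\<integral>\<^sup>+ w. ennreal (indicator {w. 1 < norm w} w * f (norm (w::'a))) \<partial>lborel) < \<infinity>"
proof -
  let ?L = "\<lambda>z. ennreal (indicator (UNIV - {0}) z * min 1 ((norm z)\<^sup>2) * nu z)"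
  have [measurable]: "nu \<in> borel_measurable borel" and nu: "\<And>x. 0 \<le> nu x"
    and L: "(\<integral>\<^sup>+ z. ?L z \<partial>lborel) < \<infinity>"
    using levy unfolding levy_density_def by auto
  have tail_le: "ennreal (indicator {w. 1 < norm w} w * f (norm w)) \<le> ennreal C * ?L w" for w
  proof (cases "1 < norm w")
    case True
    then have "w \<noteq> 0" and "min 1 ((norm w)\<^sup>2) = 1"
      by (auto simp: less_imp_le one_le_power)
    then show ?thesis
      using True lower[of w] nu[of w] C by (simp add: ennreal_mult[symmetric] ennreal_leI)
  qed simp
  have "(\<integral>\<^sup>+ w. ennreal (indicator {w. 1 < norm w} w * f (norm (w::'a))) \<partial>lborel)
        \<le> (\<integral>\<^sup>+ w. ennreal C * ?L w \<partial>lborel)"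
    by (rule nn_integral_mono) (rule tail_le)
  also have "\<dots> = ennreal C * (\<integral>\<^sup>+ w. ?L w \<partial>lborel)"
    by (simp add: nn_integral_cmult)
  also have "\<dots> < \<infinity>"
    using L by (simp add: ennreal_mult_less_top)
  finally show ?thesis .
qed

text \<open>Otherwise \<open>nu\<close> would be bounded near the origin, contradicting its infinite total mass.\<close>
lemma levy_profile_exceeds_one:
  fixes nu :: "'a::euclidean_space \<Rightarrow> real"
  assumes levy: "levy_density nu" and C: "0 \<le> C"
    and upper: "\<And>x. x \<noteq> 0 \<Longrightarrow> nu x \<le> C * f (norm x)"
  shows "\<exists>r>0. 1 \<le> f r"
proof (rule ccontr)
  assume "\<not> (\<exists>r>0. 1 \<le> f r)"
  then have f_lt_1: "\<And>r. 0 < r \<Longrightarrow> f r < 1"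
    by (simp add: not_le)
  let ?L = "\<lambda>z. ennreal (indicator (UNIV - {0}) z * min 1 ((norm z)\<^sup>2) * nu z)"
  have [measurable]: "nu \<in> borel_measurable borel"
    and L: "(\<integral>\<^sup>+ z. ?L z \<partial>lborel) < \<infinity>"
    and infinite: "(\<integral>\<^sup>+ z. ennreal (indicator (UNIV - {0}) z * nu z) \<partial>lborel) = \<infinity>"
    using levy unfolding levy_density_def by auto
  have nu_le: "ennreal (indicator (UNIV - {0}) z * nu z) \<le> ennreal C * indicator (ball 0 1) z + ?L z"
    for z :: 'a
  proof (cases "z = 0 \<or> 1 \<le> norm z")
    case True
    then show ?thesis
      by (auto simp: indicator_def one_le_power)
  next
    case False
    then have "C * f (norm z) \<le> C * 1"
      using f_lt_1[of "norm z"] C by (intro mult_left_mono) auto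
    then have "nu z \<le> C"
      using upper[of z] False by simp
    then show ?thesis
      using False by (simp add: indicator_def add_increasing2 ennreal_leI)
  qed
  have "(\<integral>\<^sup>+ z. ennreal (indicator (UNIV - {0}) z * nu z) \<partial>lborel)
      \<le> (\<integral>\<^sup>+ z. ennreal C * indicator (ball (0::'a) 1) z + ?L z \<partial>lborel)"
    by (intro nn_integral_mono nu_le)
  also have "\<dots> = ennreal C * emeasure lborel (ball (0::'a) 1) + (\<integral>\<^sup>+ z. ?L z \<partial>lborel)"
  proof (subst nn_integral_add)
    show "(\<lambda>z. ennreal C * indicator (ball (0::'a) 1) z) \<in> borel_measurable lborel"
      by (auto intro!: borel_measurable_times_ennreal borel_measurable_indicator)
    show "?L \<in> borel_measurable lborel"
      by measurable
  qed (simp add: nn_integral_cmult_indicator)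
  also have "\<dots> < \<infinity>"
    using L emeasure_lborel_ball_finite[of "0::'a" 1] by (simp add: ennreal_mult_less_top)
  finally show False
    using infinite by simp
qed

lemma integral_mult_density_le:
  fixes h q :: "'a \<Rightarrow> real"
  assumes h: "integrable M h" "AE y in M. 0 \<le> h y" "(\<integral>y. h y \<partial>M) = 1"
    and q: "\<And>y. q y \<le> k" and k: "0 \<le> k"
  shows "(\<integral>y. q y * h y \<partial>M) \<le> k"
proof -
  have "(\<integral>y. q y * h y \<partial>M) \<le> (\<integral>y. k * h y \<partial>M)"
  proof (rule integral_mono_AE')
    show "integrable M (\<lambda>y. k * h y)"
      using h by simp
    show "AE y in M. q y * h y \<le> k * h y"
      using h(2) by eventually_elim (simp add: q mult_right_mono)
    show "AE y in M. 0 \<le> k * h y"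
      using h(2) by eventually_elim (simp add: k)
  qed
  also have "\<dots> = k"
    using h by simp
  finally show ?thesis .
qed

lemma nn_integral_two_balls_le:
  fixes x y :: "'a::euclidean_space"
  assumes g: "g \<in> borel_measurable lborel" and a: "0 \<le> a"
    and g_le: "(\<integral>\<^sup>+ z. g z \<partial>lborel) \<le> ennreal b" and b: "0 \<le> b"
  shows "(\<integral>\<^sup>+ z. ennreal a * indicator (cball x 1) z + (ennreal a * indicator (cball y 1) z + g z) \<partial>lborel)
    \<le> ennreal (2 * a * measure lborel (cball (0::'a) 1) + b)"
proof -
  define v where "v = measure lborel (cball (0::'a) 1)"
  have v: "0 \<le> v"
    by (simp add: v_def)
  have emeasure_cball: "emeasure lborel (cball p 1) = ennreal v" for p :: 'a
    using emeasure_lborel_cball_finite[of p 1]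
    by (simp add: emeasure_eq_ennreal_measure v_def Ball_Volume.content_cball)
  have ball_measurable: "(\<lambda>z. ennreal a * indicator (cball p 1) z) \<in> borel_measurable lborel" for p :: 'a
    by (intro borel_measurable_times_ennreal borel_measurable_const borel_measurable_indicator) auto
  have "(\<integral>\<^sup>+ z. ennreal a * indicator (cball x 1) z + (ennreal a * indicator (cball y 1) z + g z) \<partial>lborel)
      = ennreal a * ennreal v + (ennreal a * ennreal v + (\<integral>\<^sup>+ z. g z \<partial>lborel))"
    by (subst nn_integral_add[OF ball_measurable borel_measurable_add[OF ball_measurable g]],
        subst nn_integral_add[OF ball_measurable g])
      (simp add: nn_integral_cmult_indicator emeasure_cball)
  also have "\<dots> \<le> ennreal (a * v) + (ennreal (a * v) + ennreal b)"
    using g_le a v by (intro add_mono order.refl) (simp_all add: ennreal_mult')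
  also have "\<dots> = ennreal (a * v + (a * v + b))"
  proof -
    have "0 \<le> a * v"
      using a v by simp
    then show ?thesis
      using b by (simp only: ennreal_plus add_nonneg_nonneg)
  qed
  also have "\<dots> = ennreal (2 * a * v + b)"
    by (rule arg_cong[where f = ennreal]) simp
  finally show ?thesis
    by (simp add: v_def)
qed

lemma Qop_le:
  assumes qk: "\<And>y. qk lambda0 phi0 u t x y \<le> b" and b: "0 \<le> b"
    and h: "integrable (mu phi0) h" "AE y in mu phi0. 0 \<le> h y" "(\<integral>y. h y \<partial>mu phi0) = 1"
  shows "Qop lambda0 phi0 u t h x \<le> b"
  unfolding Qop_def by (rule integral_mult_density_le[OF h qk b])

locale continuous_radial_profile = radial_profile +
  assumes continuous: "continuous_on {0<..} f"
begin

lemma borel_measurable_f1[measurable]: "f1 f \<in> borel_measurable borel"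
proof -
  have f1_if: "f1 f = (\<lambda>r. if r \<in> {0<..} then min (f r) 1 else 1)"
    by (auto simp: f1_def fun_eq_iff)
  show ?thesis
    unfolding f1_if
    by (rule borel_measurable_continuous_on_if) (auto intro!: continuous_intros continuous)
qed

lemma borel_measurable_tail[measurable]:
  "(\<lambda>r. indicator {1<..} r * f r) \<in> borel_measurable borel"
  using borel_measurable_continuous_on_indicator[of "{1<..}" f]
    continuous_on_subset[OF continuous, of "{1<..}"] by auto

lemma far_convolution_le_profile:
  fixes x y :: "'a::euclidean_space"
  assumes A1: "\<forall>x::'a. norm x \<ge> 1 \<longrightarrow>
        (\<integral>\<^sup>+ y. ennreal (indicator {y. norm (x - y) > 1 \<and> norm y > 1} y
                         * f (norm (x - y)) * f (norm y)) \<partial>lborel) \<le> ennreal (C3 * f (norm x))"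
    and D: "1 \<le> norm (x - y)"
  shows "(\<integral>\<^sup>+ z. ennreal (indicator {z. 1 < norm (x - z) \<and> 1 < norm (z - y)} z
                      * f1 f (norm (x - z)) * f1 f (norm (z - y))) \<partial>lborel)
      \<le> ennreal (C3 * f (norm (x - y)))"
proof -
  define G where "G w = ennreal (indicator {w. 1 < norm (x - y - w) \<and> 1 < norm w} w
                                 * f (norm (x - y - w)) * f (norm w))" for w
  have "G = (\<lambda>w. ennreal (indicator {1<..} (norm (x - y - w)) * f (norm (x - y - w))
                           * (indicator {1<..} (norm w) * f (norm w))))"
    by (auto simp: G_def fun_eq_iff indicator_def)
  then have G_measurable: "G \<in> borel_measurable borel"
    by simp measurable
  have f1_le_f: "f1 f (norm (x - z)) * f1 f (norm (z - y)) \<le> f (norm (x - z)) * f (norm (z - y))"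
    if "1 < norm (x - z)" "1 < norm (z - y)" for z
  proof -
    have "0 < norm (x - z)" "0 < norm (z - y)"
      using that by linarith+
    then show ?thesis
      using f1_le[of "norm (x - z)" f] f1_le[of "norm (z - y)" f] f1_pos[of "norm (z - y)"]
        positive[of "norm (x - z)"]
      by (intro mult_mono) (simp_all only: less_imp_le)
  qed
  have "(\<integral>\<^sup>+ z. ennreal (indicator {z. 1 < norm (x - z) \<and> 1 < norm (z - y)} z
                      * f1 f (norm (x - z)) * f1 f (norm (z - y))) \<partial>lborel)
      \<le> (\<integral>\<^sup>+ z. G (z - y) \<partial>lborel)"
    using f1_le_f by (intro nn_integral_mono) (auto simp: G_def indicator_def ennreal_leI)
  also have "\<dots> = (\<integral>\<^sup>+ w. G w \<partial>lborel)"
    by (rule nn_integral_lborel_translate[OF G_measurable])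
  also have "\<dots> \<le> ennreal (C3 * f (norm (x - y)))"
    using A1[rule_format, of "x - y"] D by (simp add: G_def)
  finally show ?thesis .
qed

lemma far_convolution_le_tail_integral:
  fixes x y :: "'a::euclidean_space"
  shows "(\<integral>\<^sup>+ z. ennreal (indicator {z. 1 < norm (x - z) \<and> 1 < norm (z - y)} z
                      * f1 f (norm (x - z)) * f1 f (norm (z - y))) \<partial>lborel)
      \<le> (\<integral>\<^sup>+ w. ennreal (indicator {w. 1 < norm w} w * f (norm (w::'a))) \<partial>lborel)"
proof -
  define H where "H w = ennreal (indicator {w. 1 < norm w} w * f (norm (w::'a)))" for w
  have "H = (\<lambda>w. ennreal (indicator {1<..} (norm w) * f (norm w)))"
    by (auto simp: H_def fun_eq_iff indicator_def)
  then have H_measurable: "H \<in> borel_measurable borel"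
    by simp measurable
  have f1_le_tail: "f1 f (norm (x - z)) * f1 f (norm (z - y)) \<le> f (norm (z - y))"
    if "1 < norm (z - y)" for z
  proof -
    have "f1 f (norm (x - z)) * f1 f (norm (z - y)) \<le> f1 f (norm (z - y))"
      using f1_pos f1_le_one by (simp add: mult_left_le_one_le less_imp_le)
    also have "\<dots> \<le> f (norm (z - y))"
      by (intro f1_le) (use that in linarith)
    finally show ?thesis .
  qed
  have "(\<integral>\<^sup>+ z. ennreal (indicator {z. 1 < norm (x - z) \<and> 1 < norm (z - y)} z
                      * f1 f (norm (x - z)) * f1 f (norm (z - y))) \<partial>lborel)
      \<le> (\<integral>\<^sup>+ z. H (z - y) \<partial>lborel)"
    using f1_le_tail by (intro nn_integral_mono) (auto simp: H_def indicator_def ennreal_leI)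
  also have "\<dots> = (\<integral>\<^sup>+ w. H w \<partial>lborel)"
    by (rule nn_integral_lborel_translate[OF H_measurable])
  finally show ?thesis
    by (simp add: H_def)
qed

lemma far_convolution_le:
  fixes C3 :: real
  assumes C3: "0 < C3" and A1: "\<forall>x::'a::euclidean_space. norm x \<ge> 1 \<longrightarrow>
        (\<integral>\<^sup>+ y. ennreal (indicator {y. norm (x - y) > 1 \<and> norm y > 1} y
                         * f (norm (x - y)) * f (norm y)) \<partial>lborel) \<le> ennreal (C3 * f (norm x))"
    and tail: "(\<integral>\<^sup>+ w. ennreal (indicator {w. 1 < norm w} w * f (norm (w::'a))) \<partial>lborel) < \<infinity>"
  shows "\<exists>B\<ge>0. \<forall>x y::'a.
    (\<integral>\<^sup>+ z. ennreal (indicator {z. 1 < norm (x - z) \<and> 1 < norm (z - y)} z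
                      * f1 f (norm (x - z)) * f1 f (norm (z - y))) \<partial>lborel)
      \<le> ennreal (B * f1 f (norm (x - y)))"
proof -
  obtain j where j: "(\<integral>\<^sup>+ w. ennreal (indicator {w. 1 < norm w} w * f (norm (w::'a))) \<partial>lborel) = ennreal j"
    "0 \<le> j"
    using tail by (cases "\<integral>\<^sup>+ w. ennreal (indicator {w. 1 < norm w} w * f (norm (w::'a))) \<partial>lborel") auto
  define B where "B = C3 * (1 + f 1) + j / f1 f 1"
  have B: "0 \<le> B" "C3 * (1 + f 1) \<le> B" "j / f1 f 1 \<le> B"
    using C3 positive[of 1] f1_pos[of 1] j by (auto simp: B_def)
  show ?thesis
  proof (intro exI[of _ B] conjI allI)
    fix x y :: 'a
    define D where "D = norm (x - y)"
    have "C3 * f D \<le> B * f1 f D" if "1 \<le> D"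
      using f_le_f1[OF that] C3 B f1_pos[of D] by (smt (verit) mult_left_mono mult_right_mono mult.assoc)
    moreover have "j \<le> B * f1 f D" if "D < 1"
    proof -
      have "f1 f 1 \<le> f1 f D"
        using f1_antimono[of D 1] that by (simp add: D_def)
      then have "j \<le> j / f1 f 1 * f1 f D"
        using j f1_pos[of 1] by (simp add: field_simps mult_left_mono)
      also have "\<dots> \<le> B * f1 f D"
        using B f1_pos[of D] by (intro mult_right_mono) auto
      finally show ?thesis .
    qed
    ultimately show "(\<integral>\<^sup>+ z. ennreal (indicator {z. 1 < norm (x - z) \<and> 1 < norm (z - y)} z
                      * f1 f (norm (x - z)) * f1 f (norm (z - y))) \<partial>lborel)
      \<le> ennreal (B * f1 f (norm (x - y)))"
      using far_convolution_le_profile[OF A1, of x y] far_convolution_le_tail_integral[of x y] j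
      by (cases "1 \<le> D") (force simp: D_def intro: order.trans ennreal_leI)+
  qed (rule B)
qed

text \<open>Near \<open>x\<close> or \<open>y\<close> one factor is at most 1 and the other is comparable to
  \<open>f1 f (norm (x - y))\<close> by the shift bound; away from both, use \<open>far_convolution_le\<close>.\<close>
lemma f1_convolution_le:
  fixes C3 :: real
  assumes C3: "0 < C3" and A1: "\<forall>x::'a::euclidean_space. norm x \<ge> 1 \<longrightarrow>
        (\<integral>\<^sup>+ y. ennreal (indicator {y. norm (x - y) > 1 \<and> norm y > 1} y
                         * f (norm (x - y)) * f (norm y)) \<partial>lborel) \<le> ennreal (C3 * f (norm x))"
    and tail: "(\<integral>\<^sup>+ w. ennreal (indicator {w. 1 < norm w} w * f (norm (w::'a))) \<partial>lborel) < \<infinity>"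
  shows "\<exists>M>0. \<forall>x y::'a. (\<integral>\<^sup>+ z. ennreal (f1 f (norm (x - z)) * f1 f (norm (z - y))) \<partial>lborel)
            \<le> ennreal (M * f1 f (norm (x - y)))"
proof -
  obtain c0 where "0 < c0" and "\<forall>a b. 2 < a \<longrightarrow> 2 < b \<longrightarrow> f a * f b \<le> c0 * f (a + b - 1)"
    using product_le_shifted_sum[OF C3 A1] by blast
  then obtain c1 where c1: "1 \<le> c1" and shift: "\<forall>t\<ge>0. f1 f t \<le> c1 * f1 f (t + 1)"
    using f1_le_shift by blast
  obtain B where B: "0 \<le> B" and far: "\<forall>x y::'a.
    (\<integral>\<^sup>+ z. ennreal (indicator {z. 1 < norm (x - z) \<and> 1 < norm (z - y)} z
                      * f1 f (norm (x - z)) * f1 f (norm (z - y))) \<partial>lborel)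
      \<le> ennreal (B * f1 f (norm (x - y)))"
    using far_convolution_le[OF C3 A1 tail] by blast
  define v where "v = measure lborel (cball (0::'a) 1)"
  have v: "0 \<le> v"
    by (simp add: v_def)
  show ?thesis
  proof (intro exI[of _ "2 * c1 * v + B + 1"] conjI allI)
    have "0 \<le> c1 * v"
      using c1 v by simp
    then show "0 < 2 * c1 * v + B + 1"
      using B by simp
    fix x y :: 'a
    define D where "D = norm (x - y)"
    define g where "g z = ennreal (indicator {z. 1 < norm (x - z) \<and> 1 < norm (z - y)} z
                      * f1 f (norm (x - z)) * f1 f (norm (z - y)))" for z
    have split: "ennreal (f1 f (norm (x - z)) * f1 f (norm (z - y)))
       \<le> ennreal (c1 * f1 f D) * indicator (cball x 1) z
         + (ennreal (c1 * f1 f D) * indicator (cball y 1) z + g z)" for z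
    proof -
      consider "norm (x - z) \<le> 1" | "norm (z - y) \<le> 1" | "1 < norm (x - z)" "1 < norm (z - y)"
        by linarith
      then show ?thesis
      proof cases
        case 1
        then show ?thesis
          using f1_product_le_near[OF c1 shift, of x z y]
          by (simp add: D_def dist_norm add_increasing2 ennreal_leI)
      next
        case 2
        then show ?thesis
          using f1_product_le_near[OF c1 shift, of x z y]
          by (simp add: D_def dist_norm norm_minus_commute add_increasing add_increasing2 ennreal_leI)
      next
        case 3
        then show ?thesis
          by (simp add: g_def add_increasing)
      qed
    qed
    have "(\<integral>\<^sup>+ z. ennreal (f1 f (norm (x - z)) * f1 f (norm (z - y))) \<partial>lborel)
       \<le> (\<integral>\<^sup>+ z. ennreal (c1 * f1 f D) * indicator (cball x 1) z
         + (ennreal (c1 * f1 f D) * indicator (cball y 1) z + g z) \<partial>lborel)"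
      by (rule nn_integral_mono) (rule split)
    also have "\<dots> \<le> ennreal (2 * (c1 * f1 f D) * v + B * f1 f D)"
      unfolding v_def
    proof (rule nn_integral_two_balls_le)
      show "g \<in> borel_measurable lborel"
        unfolding g_def by measurable
      show "(\<integral>\<^sup>+ z. g z \<partial>lborel) \<le> ennreal (B * f1 f D)"
        using far by (simp add: g_def D_def)
    qed (use c1 B f1_pos[of D] in simp_all)
    also have "\<dots> = ennreal ((2 * c1 * v + B) * f1 f D)"
      by (rule arg_cong[where f = ennreal]) (simp add: algebra_simps)
    also have "\<dots> \<le> ennreal ((2 * c1 * v + B + 1) * f1 f D)"
      using f1_pos[of D] by (intro ennreal_leI mult_right_mono) auto
    finally show "(\<integral>\<^sup>+ z. ennreal (f1 f (norm (x - z)) * f1 f (norm (z - y))) \<partial>lborel)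
        \<le> ennreal ((2 * c1 * v + B + 1) * f1 f (norm (x - y)))"
      by (simp add: D_def)
  qed
qed

lemma inv_into_square_le:
  assumes r1: "0 < r1" "1 \<le> f r1" and w: "0 < w" "w \<le> 1" and r: "0 < r" "(f r)\<^sup>2 \<le> w"
  shows "inv_into {0<..} (\<lambda>r. (f r)\<^sup>2) w \<le> r"
proof -
  have "r1 \<le> r"
  proof (rule ccontr)
    assume "\<not> r1 \<le> r"
    then have "1 < f r"
      using strict_decreasing[of r r1] r r1 by simp
    then have "1 < (f r)\<^sup>2"
      by (simp add: one_less_power)
    then show False
      using r w by simp
  qed
  moreover have "w \<le> (f r1)\<^sup>2"
    using r1 w one_le_power[of "f r1" 2] by linarith
  moreover have "continuous_on {r1..r} (\<lambda>r. (f r)\<^sup>2)"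
    using r1 by (intro continuous_intros continuous_on_subset[OF continuous]) auto
  ultimately obtain r' where "r1 \<le> r'" "(f r')\<^sup>2 = w"
    using IVT2'[of "\<lambda>r. (f r)\<^sup>2" r w r1] r by blast
  then have w_image: "w \<in> (\<lambda>r. (f r)\<^sup>2) ` {0<..}"
    using r1 by (intro rev_image_eqI[of r']) auto
  define r0 where "r0 = inv_into {0<..} (\<lambda>r. (f r)\<^sup>2) w"
  have r0: "0 < r0" "(f r0)\<^sup>2 = w"
    using inv_into_into[OF w_image] f_inv_into_f[OF w_image] by (auto simp: r0_def)
  show ?thesis
  proof (rule ccontr)
    assume "\<not> inv_into {0<..} (\<lambda>r. (f r)\<^sup>2) w \<le> r"
    then have "f r0 < f r"
      using strict_decreasing[of r r0] r by (simp add: r0_def)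
    then have "(f r0)\<^sup>2 < (f r)\<^sup>2"
      using power_strict_mono[of "f r0" "f r" 2] positive[of r0] r0 by simp
    then show False
      using r r0 by simp
  qed
qed

text \<open>The factor 2 forces \<open>f1 f r < 1\<close>, so that \<open>f1 f r = f r\<close> and \<open>r > 0\<close>.\<close>
lemma inv_into_square_le_of_f1_le:
  assumes r1: "0 < r1" "1 \<le> f r1" and k: "0 < k" and v: "2 * k \<le> v"
    and bound: "v \<le> k / (f1 f r)\<^sup>2"
  shows "inv_into {0<..} (\<lambda>r. (f r)\<^sup>2) (2 * k / v) \<le> r"
proof -
  define s where "s = (f1 f r)\<^sup>2"
  have s: "0 < s"
    using f1_pos[of r] by (simp add: s_def)
  have "v * s \<le> k"
    using bound s by (simp add: s_def field_simps)
  then have s_le: "s \<le> k / v"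
    using k v s by (simp add: field_simps)
  also have "\<dots> \<le> 1 / 2"
    using k v by (simp add: field_simps)
  finally have "s < 1"
    by simp
  then have "f1 f r < 1"
    using f1_pos[of r] by (simp add: s_def power_less_one_iff)
  then have "0 < r" "f1 f r = f r"
    by (auto simp: f1_def split: if_splits)
  moreover have "k / v \<le> 2 * k / v"
    using k v by (simp add: divide_right_mono)
  moreover have "0 < 2 * k / v" "2 * k / v \<le> 1"
    using k v by simp_all
  ultimately show ?thesis
    using inv_into_square_le[OF r1] s_le by (simp add: s_def)
qed

lemma superlevel_sets_of_f1_bounded:
  fixes F :: "'a::real_normed_vector \<Rightarrow> real"
  assumes r1: "0 < r1" "1 \<le> f r1" and k: "0 < k" and F: "\<And>x. F x \<le> k / (f1 f (norm x))\<^sup>2"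
  shows "(\<forall>x. F x \<le> 2 * k / (f1 f (norm x))\<^sup>2) \<and>
         (\<forall>v \<ge> 2 * k. {x. F x \<ge> v} \<subseteq> {x. norm x \<ge> inv_into {0<..} (\<lambda>r. (f r)\<^sup>2) (2 * k / v)})"
proof (intro conjI allI impI subsetI)
  fix x :: 'a
  have "k / (f1 f (norm x))\<^sup>2 \<le> 2 * k / (f1 f (norm x))\<^sup>2"
    using k by (intro divide_right_mono) simp_all
  with F[of x] show "F x \<le> 2 * k / (f1 f (norm x))\<^sup>2"
    by linarith
next
  fix v :: real and x :: 'a
  assume "2 * k \<le> v" and "x \<in> {x. v \<le> F x}"
  with F[of x] show "x \<in> {x. inv_into {0<..} (\<lambda>r. (f r)\<^sup>2) (2 * k / v) \<le> norm x}"
    using inv_into_square_le_of_f1_le[OF r1 k, of v "norm x"] by simp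
qed

end

lemma assumption_A_radial_profile:
  assumes "assumption_A f g nu V p"
  shows "continuous_radial_profile f"
  using assms unfolding assumption_A_def by unfold_locales auto

lemma assumption_A_f1_estimates:
  fixes nu :: "'a::euclidean_space \<Rightarrow> real"
  assumes levy: "levy_density nu" and A: "assumption_A f g nu V p"
  shows "\<exists>M>0. \<forall>x y::'a. (\<integral>\<^sup>+ z. ennreal (f1 f (norm (x - z)) * f1 f (norm (z - y))) \<partial>lborel)
            \<le> ennreal (M * f1 f (norm (x - y)))"
    and "\<exists>c>0. \<forall>a b. 0 \<le> a \<longrightarrow> 0 \<le> b \<longrightarrow> f1 f a * f1 f b \<le> c * f1 f (a + b)"
    and "\<exists>r>0. 1 \<le> f r"
proof -
  interpret continuous_radial_profile f
    using assumption_A_radial_profile[OF A] .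
  obtain C1 where C1: "1 \<le> C1"
    and comparable: "\<forall>x::'a. x \<noteq> 0 \<longrightarrow> f (norm x) / C1 \<le> nu x \<and> nu x \<le> C1 * f (norm x)"
    using A unfolding assumption_A_def by (elim conjE exE) fast
  obtain C3 where C3: "0 < C3" and A1: "\<forall>x::'a. norm x \<ge> 1 \<longrightarrow>
        (\<integral>\<^sup>+ y. ennreal (indicator {y. norm (x - y) > 1 \<and> norm y > 1} y
                         * f (norm (x - y)) * f (norm y)) \<partial>lborel) \<le> ennreal (C3 * f (norm x))"
    using A unfolding assumption_A_def by (elim conjE exE) fast
  have "(\<integral>\<^sup>+ w. ennreal (indicator {w. 1 < norm w} w * f (norm (w::'a))) \<partial>lborel) < \<infinity>"
    using levy_tail_integral_finite[OF levy, of C1] comparable C1 by (simp add: field_simps)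
  then show "\<exists>M>0. \<forall>x y::'a. (\<integral>\<^sup>+ z. ennreal (f1 f (norm (x - z)) * f1 f (norm (z - y))) \<partial>lborel)
            \<le> ennreal (M * f1 f (norm (x - y)))"
    by (rule f1_convolution_le[OF C3 A1])
  show "\<exists>c>0. \<forall>a b. 0 \<le> a \<longrightarrow> 0 \<le> b \<longrightarrow> f1 f a * f1 f b \<le> c * f1 f (a + b)"
    using product_le_shifted_sum[OF C3 A1] f1_mult_le_add by blast
  show "\<exists>r>0. 1 \<le> f r"
    using levy_profile_exceeds_one[OF levy, of C1] comparable C1 by simp
qed

lemma assumption_A_qk_le:
  fixes nu phi0 :: "'a::euclidean_space \<Rightarrow> real"
  assumes levy: "levy_density nu" and A: "assumption_A f g nu V p"
    and hk: "heat_kernel_estimate f g lambda0 phi0 u" and t: "0 < t"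
  shows "\<exists>k>0. \<forall>x y. qk lambda0 phi0 u t x y \<le> k / (f1 f (norm x))\<^sup>2"
proof -
  interpret continuous_radial_profile f
    using assumption_A_radial_profile[OF A] .
  have g: "\<And>r. 0 \<le> r \<Longrightarrow> 0 < g r"
    using A by (simp add: assumption_A_def)
  obtain M c where M: "0 < M" and conv: "\<forall>x y::'a. (\<integral>\<^sup>+ z. ennreal (f1 f (norm (x - z)) * f1 f (norm (z - y))) \<partial>lborel)
            \<le> ennreal (M * f1 f (norm (x - y)))"
    and c: "0 < c" and P: "\<forall>a b. 0 \<le> a \<longrightarrow> 0 \<le> b \<longrightarrow> f1 f a * f1 f b \<le> c * f1 f (a + b)"
    using assumption_A_f1_estimates(1,2)[OF levy A] by blast
  show ?thesis
    using qk_le_f1[OF g hk t _ conv _ P] M c by simp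
qed

text \<open>Only (A) and the upper heat kernel estimate are needed; the remaining hypotheses enter
  the paper only through the derivation of that estimate.\<close>
theorem lemma3p1:
  fixes f g :: "real \<Rightarrow> real"
    and nu V phi0 :: "'a::euclidean_space \<Rightarrow> real"
    and p :: "real \<Rightarrow> 'a \<Rightarrow> real"
    and u :: "real \<Rightarrow> 'a \<Rightarrow> 'a \<Rightarrow> real"
    and lambda0 :: real
  assumes "levy_density nu"
    and "confining_potential V"
    and "assumption_A f g nu V p"
    and "condition_D f g"
    and "ground_state phi0"
    and "schroedinger_kernel u"
    and "heat_kernel_estimate f g lambda0 phi0 u"
  shows "\<forall>t > 0. \<exists>\<kappa> > 0. \<forall>h.
           integrable (mu phi0) h \<and> (AE y in mu phi0. h y \<ge> 0) \<and> (\<integral>y. h y \<partial>mu phi0) = 1 \<longrightarrow>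
             (\<forall>x. Qop lambda0 phi0 u t h x \<le> \<kappa> / (f1 f (norm x))\<^sup>2) \<and>
             (\<forall>v \<ge> \<kappa>. {x. Qop lambda0 phi0 u t h x \<ge> v}
                        \<subseteq> {x. norm x \<ge> inv_into {0<..} (\<lambda>r. (f r)\<^sup>2) (\<kappa> / v)})"
proof (intro allI impI)
  fix t :: real
  assume t: "0 < t"
  interpret continuous_radial_profile f
    using assumption_A_radial_profile[OF assms(3)] .
  obtain r1 where r1: "0 < r1" "1 \<le> f r1"
    using assumption_A_f1_estimates(3)[OF assms(1,3)] by blast
  obtain k where k: "0 < k" and qk: "\<forall>x y. qk lambda0 phi0 u t x y \<le> k / (f1 f (norm x))\<^sup>2"
    using assumption_A_qk_le[OF assms(1,3,7) t] by blast
  have "(\<forall>x. Qop lambda0 phi0 u t h x \<le> 2 * k / (f1 f (norm x))\<^sup>2) \<and>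
        (\<forall>v \<ge> 2 * k. {x. Qop lambda0 phi0 u t h x \<ge> v}
                      \<subseteq> {x. norm x \<ge> inv_into {0<..} (\<lambda>r. (f r)\<^sup>2) (2 * k / v)})"
    if "integrable (mu phi0) h \<and> (AE y in mu phi0. h y \<ge> 0) \<and> (\<integral>y. h y \<partial>mu phi0) = 1" for h
    using that qk k by (intro superlevel_sets_of_f1_bounded[OF r1 k] Qop_le) auto
  with k show "\<exists>\<kappa> > 0. \<forall>h.
           integrable (mu phi0) h \<and> (AE y in mu phi0. h y \<ge> 0) \<and> (\<integral>y. h y \<partial>mu phi0) = 1 \<longrightarrow>
             (\<forall>x. Qop lambda0 phi0 u t h x \<le> \<kappa> / (f1 f (norm x))\<^sup>2) \<and>
             (\<forall>v \<ge> \<kappa>. {x. Qop lambda0 phi0 u t h x \<ge> v}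
                        \<subseteq> {x. norm x \<ge> inv_into {0<..} (\<lambda>r. (f r)\<^sup>2) (\<kappa> / v)})"
    by (intro exI[of _ "2 * k"]) auto
qed

end
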